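(* Let $U$ be the Fourier/wavelets matrix described in the context, with $\Psi$ having $v\ge1$ vanishing moments. Let $R_1,R_2\in\mathbb{N}\setminus\{0\}$ with $R_2>R_1$, and let $M_1<M_2$ be such that $\{\varphi_j:M_1<j\le M_2\}\subseteq\Omega_{R_2,a}\setminus\Omega_{R_1,a}$. Then for any $\gamma\in(0,1)$, $$\|P_NUP^{M_1}_{M_2}\|\le\frac{\pi^2}{4}\|\theta_\Psi\|_{L^\infty}\cdot(2\pi\gamma)^v\cdot\sqrt{\frac{1-2^{2v(R_1-R_2)}}{1-2^{-2v}}}$$ whenever $N\le\gamma\,\omega^{-1}2^{R_1}$.
   Context: $\hat f(\xi)=\int f(x)e^{-ix\xi}dx$. $\Phi,\Psi$: scaling function and mother wavelet of an orthonormal basis of compactly supported wavelets with an MRA, $\mathrm{supp}\Phi=\mathrm{supp}\Psi=[0,a]$, $a\ge1$; $\Psi$ having $v$ vanishing moments means $\hat\Psi(z)=(-iz)^v\theta_\Psi(z)$ with $\theta_\Psi$ bounded. $\Phi_k=\Phi(\cdot-k)$, $\Psi_{j,k}=2^{j/2}\Psi(2^j\cdot-k)$; $\Omega_a=\{\Phi_k:|k|\le\lceil a\rceil-1\}\cup\{\Psi_{j,k}:j\in\mathbb{Z}_+,-\lceil a\rceil<k<2^j\lceil a\rceil\}$, ordered by increasing resolution (the $\Phi_k$ first, then $\Psi_{0,k}$, $\Psi_{1,k}$, …, increasing $k$ within a level), giving $(\varphi_j)_{j\in\mathbb{N}}$; $\Omega_{R,a}$ consists of the $\Phi_k$ and the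 $\Psi_{j,k}\in\Omega_a$ with $j<R$. $T_1=\lceil a\rceil-1$, $T_2=2\lceil a\rceil-1$; $\omega\in(0,1/(T_1+T_2))$, $\omega^{-1}\in\mathbb{N}$; $\psi_j(x)=\sqrt\omega e^{2\pi ij\omega x}\chi_{[-T_1/(\omega(T_1+T_2)),T_2/(\omega(T_1+T_2))]}(x)$, ordered $\tilde\psi_1=\psi_0,\tilde\psi_{2n}=\psi_n,\tilde\psi_{2n+1}=\psi_{-n}$; $U=(\langle\varphi_j,\tilde\psi_i\rangle)_{i,j\in\mathbb{N}}$. $P_N$ projects onto the first $N$ coordinates and $P^{a}_{b}$ onto $\mathrm{span}\{e_{a+1},\dots,e_b\}$. *)

theory Defs
  imports "HOL-Analysis.Analysis" "HOL-Probability.Essential_Supremum"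
begin

definition square_integrable :: "(real \<Rightarrow> complex) \<Rightarrow> bool" where
  "square_integrable f \<longleftrightarrow> f \<in> borel_measurable lborel \<and> integrable lborel (\<lambda>x. (cmod (f x))\<^sup>2)"

definition l2_inner :: "(real \<Rightarrow> complex) \<Rightarrow> (real \<Rightarrow> complex) \<Rightarrow> complex" where
  "l2_inner f g = (LINT x|lborel. f x * cnj (g x))"

definition fourier :: "(real \<Rightarrow> complex) \<Rightarrow> real \<Rightarrow> complex" where
  "fourier f \<xi> = (LINT x|lborel. f x * exp (- (\<i> * complex_of_real (x * \<xi>))))"

definition l2_orthonormal_basis :: "('i \<Rightarrow> (real \<Rightarrow> complex)) \<Rightarrow> bool" where
  "l2_orthonormal_basis e \<longleftrightarrow>
     (\<forall>i. square_integrable (e i)) \<and>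
     (\<forall>i j. l2_inner (e i) (e j) = (if i = j then 1 else 0)) \<and>
     (\<forall>f. square_integrable f \<and> (\<forall>i. l2_inner f (e i) = 0) \<longrightarrow> (AE x in lborel. f x = 0))"

definition fsupport :: "(real \<Rightarrow> complex) \<Rightarrow> real set" where
  "fsupport f = closure {x. f x \<noteq> 0}"

definition dil_trans :: "(real \<Rightarrow> complex) \<Rightarrow> nat \<Rightarrow> int \<Rightarrow> real \<Rightarrow> complex" where
  "dil_trans \<Psi> j k = (\<lambda>x. complex_of_real (2 powr (real j / 2)) * \<Psi> (2 ^ j * x - of_int k))"

definition transl :: "(real \<Rightarrow> complex) \<Rightarrow> int \<Rightarrow> real \<Rightarrow> complex" where
  "transl \<Phi> k = (\<lambda>x. \<Phi> (x - of_int k))"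

text \<open>Phi is the scaling function and Psi the mother wavelet of an orthonormal wavelet
  basis arising from a multiresolution analysis, both with support exactly [0,a].
  The MRA structure is expressed by the (finite, since compactly supported) two-scale relations
  Phi, Psi in V_1 = closed span of sqrt 2 Phi(2 . - k), together with the fact that
  {Phi_k : k in Z} union {Psi_{j,k} : j >= 0, k in Z} is an orthonormal basis of L2(R).\<close>
definition compact_MRA_wavelet :: "(real \<Rightarrow> complex) \<Rightarrow> (real \<Rightarrow> complex) \<Rightarrow> real \<Rightarrow> bool" where
  "compact_MRA_wavelet \<Phi> \<Psi> a \<longleftrightarrow>
     square_integrable \<Phi> \<and> square_integrable \<Psi> \<and>
     fsupport \<Phi> = {0..a} \<and> fsupport \<Psi> = {0..a} \<and>
     l2_orthonormal_basis (\<lambda>s::int + (nat \<times> int).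
        case s of Inl k \<Rightarrow> transl \<Phi> k | Inr (j, k) \<Rightarrow> dil_trans \<Psi> j k) \<and>
     (\<exists>h::int \<Rightarrow> complex. finite {k. h k \<noteq> 0} \<and>
        (AE x in lborel. \<Phi> x = (\<Sum>k\<in>{k. h k \<noteq> 0}. h k * complex_of_real (sqrt 2) * \<Phi> (2 * x - of_int k)))) \<and>
     (\<exists>g::int \<Rightarrow> complex. finite {k. g k \<noteq> 0} \<and>
        (AE x in lborel. \<Psi> x = (\<Sum>k\<in>{k. g k \<noteq> 0}. g k * complex_of_real (sqrt 2) * \<Phi> (2 * x - of_int k))))"

definition vanishing_moments :: "(real \<Rightarrow> complex) \<Rightarrow> nat \<Rightarrow> (real \<Rightarrow> complex) \<Rightarrow> bool" where
  "vanishing_moments \<Psi> v \<theta> \<longleftrightarrow>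
     (\<forall>z. fourier \<Psi> z = (- \<i> * complex_of_real z) ^ v * \<theta> z) \<and> (\<exists>B. \<forall>z. cmod (\<theta> z) \<le> B)"

definition Linf_norm :: "(real \<Rightarrow> complex) \<Rightarrow> ereal" where
  "Linf_norm \<theta> = esssup lborel (\<lambda>z. ereal (cmod (\<theta> z)))"

text \<open>c = ceiling a. Number of wavelets Psi_{j,k} in Omega_a at level j: k ranges over
  -c < k < 2^j c, i.e. 2^j c + c - 1 elements.\<close>
definition lvl_size :: "nat \<Rightarrow> nat \<Rightarrow> nat" where
  "lvl_size c j = 2 ^ j * c + c - 1"

text \<open>The i-th element (i = 1, 2, ...) of Omega_a in the stated order: first Phi_k for
  k = -(c-1), ..., c-1 (that is 2c-1 elements), then level 0, level 1, ... with increasing k.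
  Inl k stands for Phi_k, Inr (j,k) for Psi_{j,k}.\<close>
definition wav_index :: "nat \<Rightarrow> nat \<Rightarrow> int + (nat \<times> int)" where
  "wav_index c i =
     (if i \<le> 2 * c - 1 then Inl (int (i - 1) - int (c - 1))
      else (let r = i - 2 * c;
                j = (LEAST j. r < (\<Sum>l\<le>j. lvl_size c l))
            in Inr (j, int (r - (\<Sum>l<j. lvl_size c l)) - int (c - 1))))"

definition wav_fun :: "(real \<Rightarrow> complex) \<Rightarrow> (real \<Rightarrow> complex) \<Rightarrow> int + (nat \<times> int) \<Rightarrow> real \<Rightarrow> complex" where
  "wav_fun \<Phi> \<Psi> s = (case s of Inl k \<Rightarrow> transl \<Phi> k | Inr (j, k) \<Rightarrow> dil_trans \<Psi> j k)"

definition varphi :: "(real \<Rightarrow> complex) \<Rightarrow> (real \<Rightarrow> complex) \<Rightarrow> real \<Rightarrow> nat \<Rightarrow> real \<Rightarrow> complex" where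
  "varphi \<Phi> \<Psi> a i = wav_fun \<Phi> \<Psi> (wav_index (nat \<lceil>a\<rceil>) i)"

definition Omega_R :: "(real \<Rightarrow> complex) \<Rightarrow> (real \<Rightarrow> complex) \<Rightarrow> real \<Rightarrow> nat \<Rightarrow> (real \<Rightarrow> complex) set" where
  "Omega_R \<Phi> \<Psi> a R =
     {transl \<Phi> k | k. \<bar>k\<bar> \<le> \<lceil>a\<rceil> - 1} \<union>
     {dil_trans \<Psi> j k | j k. j < R \<and> - \<lceil>a\<rceil> < k \<and> k < 2 ^ j * \<lceil>a\<rceil>}"

definition four_fun :: "real \<Rightarrow> real \<Rightarrow> int \<Rightarrow> real \<Rightarrow> complex" where
  "four_fun a \<omega> n = (\<lambda>x.
     let T1 = real_of_int (\<lceil>a\<rceil> - 1); T2 = real_of_int (2 * \<lceil>a\<rceil> - 1) in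
     complex_of_real (sqrt \<omega>) * exp (2 * complex_of_real pi * \<i> * of_int n * complex_of_real (\<omega> * x))
       * complex_of_real (indicator {- T1 / (\<omega> * (T1 + T2)) .. T2 / (\<omega> * (T1 + T2))} x))"

definition four_index :: "nat \<Rightarrow> int" where
  "four_index i = (if i \<le> 1 then 0 else if even i then int (i div 2) else - int (i div 2))"

definition Umat :: "(real \<Rightarrow> complex) \<Rightarrow> (real \<Rightarrow> complex) \<Rightarrow> real \<Rightarrow> real \<Rightarrow> nat \<Rightarrow> nat \<Rightarrow> complex" where
  "Umat \<Phi> \<Psi> a \<omega> i j = l2_inner (varphi \<Phi> \<Psi> a j) (four_fun a \<omega> (four_index i))"

text \<open>Operator norm on l2(N) of P_N A P^{M1}_{M2}: this operator only involves the rows 1..N and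
  the columns M1+1..M2 of A, so its norm is the sup of ||P_N A x|| over x supported in
  {M1+1..M2} with ||x|| <= 1.\<close>
definition PUP_norm :: "(nat \<Rightarrow> nat \<Rightarrow> complex) \<Rightarrow> nat \<Rightarrow> nat \<Rightarrow> nat \<Rightarrow> real" where
  "PUP_norm A N M1 M2 =
     Sup ((\<lambda>x. sqrt (\<Sum>i\<in>{1..N}. (cmod (\<Sum>j\<in>{M1<..M2}. A i j * x j))\<^sup>2)) `
          {x :: nat \<Rightarrow> complex. (\<Sum>j\<in>{M1<..M2}. (cmod (x j))\<^sup>2) \<le> 1})"

end

theory Submission
  imports Defs
begin

text \<open>
  The columns in question are wavelets \<psi>_{j,k} with R1 \<le> j < R2. Pairing \<psi>_{j,k} with the
  sampling vector of frequency n gives sqrt \<omega> 2^{-j/2} e^{-2\<pi>i k n \<omega> / 2^j} hat\<Psi>(2\<pi> n \<omega> / 2^j),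
  so the block of level j is a scalar weight times a section of a discrete Fourier matrix of
  size \<omega>^{-1} 2^j, which by Parseval has norm at most sqrt(\<omega>^{-1} 2^j). By the vanishing
  moments the weight is at most ||\<theta>||_\<infinity> |t|^v with |t| \<le> \<pi>\<gamma> 2^{R1-j}. A Cauchy-Schwarz
  inequality weighted by 4^{-v(j-R1)}, matching this decay, sums the levels into a geometric
  series; the stated constant (\<pi>^2/4)(2\<pi>\<gamma>)^v is a weakening of the sharper (\<pi>\<gamma>)^v.
\<close>

section \<open>Fourier transforms on the real line\<close>

lemma continuous_AE_le_imp_le:
  fixes F g :: "real \<Rightarrow> real"
  assumes "continuous_on UNIV F" "continuous_on UNIV g" and "AE z in lborel. F z \<le> g z"
  shows "F z \<le> g z"
proof -
  obtain N where N: "N \<in> null_sets lborel" "{z. \<not> F z \<le> g z} \<subseteq> N"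
    using assms(3) unfolding eventually_ae_filter by auto
  have "{z. g z < F z} \<subseteq> N" using N(2) by auto
  then have "negligible {z. g z < F z}"
    unfolding negligible_iff_null_sets
    using null_sets_completion_subset[OF _ null_sets_completionI[OF N(1)]] by blast
  moreover have "open {z. g z < F z}"
    using assms(1,2) by (intro open_Collect_less) auto
  ultimately have "{z. g z < F z} = {}" using open_not_negligible by blast
  then show ?thesis by (metis empty_iff mem_Collect_eq not_le)
qed

lemma integrable_if_square_integrable_bounded_support:
  fixes f :: "real \<Rightarrow> complex"
  assumes sq: "square_integrable f" and supp: "\<And>y. f y \<noteq> 0 \<Longrightarrow> y \<in> {l..u}"
  shows "integrable lborel f"
proof (rule Bochner_Integration.integrable_bound)
  show "integrable lborel (\<lambda>x. indicator {l..u} x + (cmod (f x))\<^sup>2 :: real)"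
    using sq unfolding square_integrable_def
    by (intro Bochner_Integration.integrable_add integrable_real_indicator) (auto simp: emeasure_lborel_Icc_eq)
  show "f \<in> borel_measurable lborel" using sq unfolding square_integrable_def by simp
  have "norm (f x) \<le> indicator {l..u} x + (cmod (f x))\<^sup>2" for x
  proof (cases "f x = 0")
    case False
    then have "x \<in> {l..u}" by (rule supp)
    moreover have "cmod (f x) \<le> 1 + (cmod (f x))\<^sup>2"
      using zero_le_power2[of "cmod (f x) - 1"]
      by (simp add: algebra_simps power2_eq_square) (use norm_ge_zero[of "f x"] in linarith)
    ultimately show ?thesis by simp
  qed simp
  then show "AE x in lborel. norm (f x) \<le> norm (indicator {l..u} x + (cmod (f x))\<^sup>2 :: real)"
    by (intro AE_I2) simp
qed

lemma isCont_fourier: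
  fixes f :: "real \<Rightarrow> complex"
  assumes int: "integrable lborel f"
  shows "isCont (fourier f) t"
  unfolding continuous_at_sequentially
proof safe
  fix X assume X: "X \<longlonglongrightarrow> t"
  have [measurable]: "f \<in> borel_measurable lborel" using int by auto
  have "(\<lambda>x. exp (- (\<i> * complex_of_real (x * r)))) \<in> borel_measurable borel" for r :: real
    by (intro borel_measurable_continuous_onI continuous_intros)
  then have [measurable]: "(\<lambda>x. exp (- (\<i> * complex_of_real (x * r)))) \<in> borel_measurable lborel" for r :: real
    by simp
  have meas: "(\<lambda>x. f x * exp (- (\<i> * complex_of_real (x * r)))) \<in> borel_measurable lborel" for r
    by measurable
  show "(fourier f \<circ> X) \<longlonglongrightarrow> fourier f t"
    unfolding comp_def fourier_def
  proof (rule integral_dominated_convergence[where w="\<lambda>x. cmod (f x)"])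
    show "integrable lborel (\<lambda>x. cmod (f x))" using int by (rule integrable_norm)
    show "AE x in lborel. (\<lambda>i. f x * exp (- (\<i> * complex_of_real (x * X i)))) \<longlonglongrightarrow> f x * exp (- (\<i> * complex_of_real (x * t)))"
      by (intro AE_I2 tendsto_intros X)
    show "AE x in lborel. norm (f x * exp (- (\<i> * complex_of_real (x * X i)))) \<le> cmod (f x)" for i
      by (intro AE_I2) (simp add: norm_mult norm_exp)
  qed (fact meas)+
qed

lemma integral_dil_trans_windowed_exp:
  fixes f :: "real \<Rightarrow> complex" and C :: complex and I :: "real set" and s :: real
  assumes supp: "\<And>y. f y \<noteq> 0 \<Longrightarrow> (y + real_of_int k) / 2 ^ j \<in> I"
  shows "(LINT x|lborel. dil_trans f j k x * (C * exp (- (\<i> * complex_of_real (x * s))) * complex_of_real (indicator I x)))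
     = C * complex_of_real (2 powr (- real j / 2)) * exp (- (\<i> * complex_of_real (real_of_int k * s / 2 ^ j))) * fourier f (s / 2 ^ j)"
proof -
  define E where "E = exp (- (\<i> * complex_of_real (real_of_int k * s / 2 ^ j)))"
  define g where "g x = complex_of_real (2 powr (real j / 2)) * f (2 ^ j * x - of_int k) * exp (- (\<i> * complex_of_real (x * s)))" for x
  have windowed: "dil_trans f j k x * (C * exp (- (\<i> * complex_of_real (x * s))) * complex_of_real (indicator I x)) = C * g x" for x
  proof (cases "f (2 ^ j * x - of_int k) = 0")
    case False
    then have "(2 ^ j * x - of_int k + of_int k) / 2 ^ j \<in> I" by (rule supp)
    then show ?thesis by (simp add: dil_trans_def g_def)
  qed (simp add: dil_trans_def g_def)
  have substituted: "g (of_int k / 2 ^ j + (1 / 2 ^ j) * y) = complex_of_real (2 powr (real j / 2)) * E * (f y * exp (- (\<i> * complex_of_real (y * (s / 2 ^ j)))))" for y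
  proof -
    have arg: "2 ^ j * (of_int k / 2 ^ j + (1 / 2 ^ j) * y) - of_int k = y" by (simp add: field_simps)
    have phase: "- (\<i> * complex_of_real ((of_int k / 2 ^ j + (1 / 2 ^ j) * y) * s)) = - (\<i> * complex_of_real (real_of_int k * s / 2 ^ j)) + - (\<i> * complex_of_real (y * (s / 2 ^ j)))"
      by (simp add: field_simps)
    show ?thesis unfolding g_def E_def arg phase exp_add by (simp add: ac_simps)
  qed
  have scale: "complex_of_real (2 powr (real j / 2)) / 2 ^ j = complex_of_real (2 powr - (real j / 2))"
  proof -
    have "(2 powr (real j / 2)) / 2 ^ j = (2 powr (- real j / 2) :: real)"
      by (simp add: powr_minus_divide powr_realpow[symmetric] field_simps flip: powr_add)
    from arg_cong[OF this, of complex_of_real] show ?thesis by simp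
  qed
  have "(LINT x|lborel. g x) = (1 / 2 ^ j) *\<^sub>R (LINT y|lborel. g (of_int k / 2 ^ j + (1 / 2 ^ j) * y))"
    using lborel_integral_real_affine[of "1 / 2 ^ j" g "of_int k / 2 ^ j"] by simp
  also have "\<dots> = (1 / 2 ^ j) *\<^sub>R (complex_of_real (2 powr (real j / 2)) * E * fourier f (s / 2 ^ j))"
    unfolding substituted fourier_def by simp
  also have "\<dots> = complex_of_real (2 powr (- real j / 2)) * E * fourier f (s / 2 ^ j)"
    by (simp add: scaleR_conv_of_real flip: scale)
  finally show ?thesis unfolding windowed E_def by simp
qed

section \<open>Discrete Fourier sums\<close>

lemma sum_cis_arith_progression_eq_0:
  fixes \<delta> b :: int and M :: nat
  assumes M: "M > 0" and \<delta>0: "\<delta> \<noteq> 0" and \<delta>M: "\<bar>\<delta>\<bar> < int M"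
  shows "(\<Sum>r<M. cis (- (2 * pi * real_of_int (\<delta> * (b + int r)) / real M))) = 0"
proof -
  define w where "w = cis (- (2 * pi * real_of_int \<delta> / real M))"
  have terms: "cis (- (2 * pi * real_of_int (\<delta> * (b + int r)) / real M)) = cis (- (2 * pi * real_of_int (\<delta> * b) / real M)) * w ^ r" for r
    unfolding w_def by (simp only: Complex.DeMoivre cis_mult, rule arg_cong[where f=cis]) (simp add: field_simps add_divide_distrib)
  have "w \<noteq> 1"
  proof
    assume "w = 1"
    then obtain n :: int where "- (2 * pi * real_of_int \<delta> / real M) = of_int (2 * n) * pi"
      unfolding w_def cis_conv_exp exp_eq_1 by auto
    then have "pi * (- real_of_int \<delta>) = pi * (real_of_int n * real M)" using M by (simp add: field_simps)
    then have "- real_of_int \<delta> = real_of_int n * real M" using pi_neq_zero by (metis mult_left_cancel)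
    then have "- \<delta> = n * int M" by (metis of_int_eq_iff of_int_mult of_int_minus of_int_of_nat_eq)
    then have "\<bar>\<delta>\<bar> = \<bar>n\<bar> * int M" by (metis abs_minus_cancel abs_mult abs_of_nat)
    moreover have "1 \<le> \<bar>n\<bar>" using \<delta>0 \<open>- \<delta> = n * int M\<close> by (cases "n = 0") (simp_all add: int_one_le_iff_zero_less)
    then have "int M \<le> \<bar>n\<bar> * int M" using mult_right_mono[of 1 "\<bar>n\<bar>" "int M"] by simp
    ultimately show False using \<delta>M by simp
  qed
  moreover have "w ^ M = 1"
  proof -
    have "w ^ M = cis (2 * pi * real_of_int (- \<delta>))" unfolding w_def Complex.DeMoivre
      using M by (intro arg_cong[where f=cis]) (simp add: field_simps)
    also have "\<dots> = 1" by (rule cis_multiple_2pi) simp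
    finally show ?thesis .
  qed
  ultimately have "(\<Sum>r<M. w ^ r) = 0" using geometric_sum[of w M] by simp
  then show ?thesis unfolding terms by (simp flip: sum_distrib_left)
qed

lemma discrete_Parseval:
  fixes D :: "'d set" and \<kappa> :: "'d \<Rightarrow> int" and y :: "'d \<Rightarrow> complex" and M :: nat and lo b :: int
  assumes fin: "finite D" and inj: "inj_on \<kappa> D" and \<kappa>: "\<And>d. d \<in> D \<Longrightarrow> lo \<le> \<kappa> d \<and> \<kappa> d < lo + int M"
    and M: "M > 0"
  shows "(\<Sum>r<M. (cmod (\<Sum>d\<in>D. y d * cis (- (2 * pi * real_of_int (\<kappa> d * (b + int r)) / real M))))\<^sup>2)
     = real M * (\<Sum>d\<in>D. (cmod (y d))\<^sup>2)"
proof -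
  define e where "e d n = cis (- (2 * pi * real_of_int (\<kappa> d * n) / real M))" for d n
  have e_mult: "e d n * cnj (e d' n) = cis (- (2 * pi * real_of_int ((\<kappa> d - \<kappa> d') * n) / real M))" for d d' n
    unfolding e_def cis_cnj cis_mult using M by (intro arg_cong[where f=cis]) (simp add: field_simps)
  have orth: "(\<Sum>r<M. e d (b + int r) * cnj (e d' (b + int r))) = (if d = d' then of_nat M else 0)"
    if "d \<in> D" "d' \<in> D" for d d'
  proof (cases "d = d'")
    case False
    then have "\<kappa> d - \<kappa> d' \<noteq> 0" using inj that by (auto dest: inj_onD)
    moreover have "\<bar>\<kappa> d - \<kappa> d'\<bar> < int M" using \<kappa>[OF that(1)] \<kappa>[OF that(2)] by auto
    ultimately show ?thesis
      using False sum_cis_arith_progression_eq_0[OF M, of "\<kappa> d - \<kappa> d'" b] unfolding e_mult by simp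
  qed (simp add: e_mult)
  have square: "complex_of_real ((cmod (\<Sum>d\<in>D. y d * e d n))\<^sup>2)
      = (\<Sum>d\<in>D. \<Sum>d'\<in>D. y d * cnj (y d') * (e d n * cnj (e d' n)))" for n
    unfolding complex_norm_square cnj_sum sum_product by (simp add: ac_simps)
  have "complex_of_real (\<Sum>r<M. (cmod (\<Sum>d\<in>D. y d * e d (b + int r)))\<^sup>2)
      = (\<Sum>r<M. \<Sum>d\<in>D. \<Sum>d'\<in>D. y d * cnj (y d') * (e d (b + int r) * cnj (e d' (b + int r))))"
    by (simp only: of_real_sum square)
  also have "\<dots> = (\<Sum>d\<in>D. \<Sum>d'\<in>D. y d * cnj (y d') * (\<Sum>r<M. e d (b + int r) * cnj (e d' (b + int r))))"
    by (simp add: sum_distrib_left sum.swap[of _ "{..<M}"])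
  also have "\<dots> = (\<Sum>d\<in>D. \<Sum>d'\<in>D. if d = d' then y d * cnj (y d') * of_nat M else 0)"
    by (intro sum.cong refl) (simp add: orth)
  also have "\<dots> = (\<Sum>d\<in>D. y d * cnj (y d) * of_nat M)"
    using fin by (simp add: sum.delta)
  also have "\<dots> = complex_of_real (real M * (\<Sum>d\<in>D. (cmod (y d))\<^sup>2))"
    by (simp add: complex_norm_square[symmetric] sum_distrib_left sum_distrib_right ac_simps)
  finally show ?thesis unfolding e_def of_real_eq_iff .
qed

lemma discrete_Parseval_le:
  fixes D :: "'d set" and \<kappa> :: "'d \<Rightarrow> int" and y :: "'d \<Rightarrow> complex" and Ns :: "int set" and M :: nat and lo b :: int
  assumes "finite D" "inj_on \<kappa> D" "\<And>d. d \<in> D \<Longrightarrow> lo \<le> \<kappa> d \<and> \<kappa> d < lo + int M" "M > 0"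
    and Ns: "Ns \<subseteq> (\<lambda>r. b + int r) ` {..<M}"
  shows "(\<Sum>n\<in>Ns. (cmod (\<Sum>d\<in>D. y d * cis (- (2 * pi * real_of_int (\<kappa> d * n) / real M))))\<^sup>2)
     \<le> real M * (\<Sum>d\<in>D. (cmod (y d))\<^sup>2)"
proof -
  define g where "g n = (cmod (\<Sum>d\<in>D. y d * cis (- (2 * pi * real_of_int (\<kappa> d * n) / real M))))\<^sup>2" for n
  have "sum g Ns \<le> sum g ((\<lambda>r. b + int r) ` {..<M})"
    using Ns unfolding g_def by (intro sum_mono2) auto
  also have "\<dots> = (\<Sum>r<M. g (b + int r))"
    by (subst sum.reindex) (auto simp: inj_on_def)
  also have "\<dots> = real M * (\<Sum>d\<in>D. (cmod (y d))\<^sup>2)"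
    unfolding g_def by (rule discrete_Parseval[OF assms(1-4)])
  finally show ?thesis unfolding g_def .
qed

lemma norm_sum_squared_le_weighted:
  fixes u :: "'a \<Rightarrow> 'b::real_normed_vector" and w :: "'a \<Rightarrow> real"
  assumes w: "\<And>j. j \<in> J \<Longrightarrow> w j > 0"
  shows "(norm (\<Sum>j\<in>J. u j))\<^sup>2 \<le> (\<Sum>j\<in>J. w j) * (\<Sum>j\<in>J. (norm (u j))\<^sup>2 / w j)"
proof -
  have "(norm (\<Sum>j\<in>J. u j))\<^sup>2 \<le> (\<Sum>j\<in>J. norm (u j))\<^sup>2"
    by (intro power_mono norm_sum) auto
  also have "(\<Sum>j\<in>J. norm (u j)) = (\<Sum>j\<in>J. sqrt (w j) * (norm (u j) / sqrt (w j)))"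
    using w by (intro sum.cong) (auto simp: less_imp_le dest!: w)
  also have "(\<dots>)\<^sup>2 \<le> (\<Sum>j\<in>J. (sqrt (w j))\<^sup>2) * (\<Sum>j\<in>J. (norm (u j) / sqrt (w j))\<^sup>2)"
    by (rule Cauchy_Schwarz_ineq_sum)
  also have "\<dots> = (\<Sum>j\<in>J. w j) * (\<Sum>j\<in>J. (norm (u j))\<^sup>2 / w j)"
    using w by (intro arg_cong2[where f="(*)"] sum.cong) (auto simp: power_divide less_imp_le)
  finally show ?thesis .
qed

lemma sum_norm_sum_squared_le_levels:
  fixes w p :: "'j \<Rightarrow> 'i \<Rightarrow> complex" and \<rho> \<beta> X :: "'j \<Rightarrow> real"
  assumes \<rho>: "\<And>j. j \<in> J \<Longrightarrow> \<rho> j > 0" and \<beta>: "\<And>j. j \<in> J \<Longrightarrow> \<beta> j \<ge> 0"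
    and w: "\<And>j i. j \<in> J \<Longrightarrow> i \<in> I \<Longrightarrow> (cmod (w j i))\<^sup>2 \<le> \<rho> j * \<beta> j"
    and p: "\<And>j. j \<in> J \<Longrightarrow> \<beta> j * (\<Sum>i\<in>I. (cmod (p j i))\<^sup>2) \<le> X j"
  shows "(\<Sum>i\<in>I. (cmod (\<Sum>j\<in>J. w j i * p j i))\<^sup>2) \<le> (\<Sum>j\<in>J. \<rho> j) * (\<Sum>j\<in>J. X j)"
proof -
  have \<rho>_sum: "(\<Sum>j\<in>J. \<rho> j) \<ge> 0" using \<rho> by (intro sum_nonneg) (auto simp: less_imp_le)
  have level: "(\<Sum>i\<in>I. (cmod (w j i))\<^sup>2 / \<rho> j * (cmod (p j i))\<^sup>2) \<le> X j" if j: "j \<in> J" for j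
  proof -
    have "(\<Sum>i\<in>I. (cmod (w j i))\<^sup>2 / \<rho> j * (cmod (p j i))\<^sup>2) \<le> (\<Sum>i\<in>I. \<beta> j * (cmod (p j i))\<^sup>2)"
      using w[OF j] \<rho>[OF j] by (intro sum_mono mult_right_mono) (auto simp: divide_le_eq ac_simps)
    also have "\<dots> \<le> X j" using p[OF j] by (simp add: sum_distrib_left)
    finally show ?thesis .
  qed
  have "(\<Sum>i\<in>I. (cmod (\<Sum>j\<in>J. w j i * p j i))\<^sup>2)
      \<le> (\<Sum>i\<in>I. (\<Sum>j\<in>J. \<rho> j) * (\<Sum>j\<in>J. (cmod (w j i * p j i))\<^sup>2 / \<rho> j))"
    using \<rho> by (intro sum_mono norm_sum_squared_le_weighted)
  also have "\<dots> = (\<Sum>j\<in>J. \<rho> j) * (\<Sum>j\<in>J. \<Sum>i\<in>I. (cmod (w j i))\<^sup>2 / \<rho> j * (cmod (p j i))\<^sup>2)"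
    by (simp add: sum_distrib_left sum.swap[of _ I] norm_mult power_mult_distrib ac_simps)
  also have "\<dots> \<le> (\<Sum>j\<in>J. \<rho> j) * (\<Sum>j\<in>J. X j)"
    using \<rho>_sum level by (intro mult_left_mono sum_mono) auto
  finally show ?thesis .
qed

section \<open>Enumerations of the wavelet and Fourier bases\<close>

lemma int_lvl_size: "c \<ge> 1 \<Longrightarrow> int (lvl_size c j) = 2 ^ j * int c + int c - 1"
  unfolding lvl_size_def by (simp add: of_nat_diff)

lemma wav_index_Inl: "i \<le> 2 * c - 1 \<Longrightarrow> wav_index c i = Inl (int (i - 1) - int (c - 1))"
  unfolding wav_index_def by simp

lemma wav_index_Inr:
  assumes c: "c \<ge> 1" and i: "\<not> i \<le> 2 * c - 1"
  obtains j k where "wav_index c i = Inr (j, k)" "- (int c - 1) \<le> k" "k \<le> 2 ^ j * int c - 1"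
    "i - 2 * c = (\<Sum>l<j. lvl_size c l) + nat (k + int c - 1)"
proof -
  define r where "r = i - 2 * c"
  define j where "j = (LEAST j. r < (\<Sum>l\<le>j. lvl_size c l))"
  define S where "S = (\<Sum>l<j. lvl_size c l)"
  define k where "k = int (r - S) - int (c - 1)"
  have "lvl_size c l \<ge> 1" for l
  proof -
    have "c \<le> 2 ^ l * c" by simp
    then show ?thesis using c unfolding lvl_size_def by linarith
  qed
  then have "r < (\<Sum>l\<le>r. lvl_size c l)"
    using sum_mono[of "{..r}" "\<lambda>_. 1" "lvl_size c"] by simp
  then have up: "r < S + lvl_size c j"
    using LeastI[of "\<lambda>j. r < (\<Sum>l\<le>j. lvl_size c l)"] unfolding S_def j_def[symmetric]
    by (simp add: lessThan_Suc_atMost[symmetric])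
  have low: "S \<le> r"
  proof (cases j)
    case (Suc j')
    then have "\<not> r < (\<Sum>l\<le>j'. lvl_size c l)" unfolding j_def by (intro not_less_Least) simp
    then show ?thesis using Suc unfolding S_def by (simp add: lessThan_Suc_atMost)
  qed (simp add: S_def)
  have "wav_index c i = Inr (j, k)"
    unfolding wav_index_def r_def j_def k_def S_def Let_def using i by simp
  moreover have "- (int c - 1) \<le> k" "k \<le> 2 ^ j * int c - 1"
    using up low c int_lvl_size[OF c, of j] unfolding k_def by (simp_all add: of_nat_diff)
  moreover have "i - 2 * c = S + nat (k + int c - 1)"
    using low c unfolding k_def r_def by simp
  ultimately show ?thesis using that unfolding S_def by blast
qed

lemma inj_on_wav_index:
  assumes c: "c \<ge> 1"
  shows "inj_on (wav_index c) {1..}"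
proof (rule inj_onI)
  fix i i' assume i: "i \<in> {1..}" "i' \<in> {1..}" and eq: "wav_index c i = wav_index c i'"
  consider "i \<le> 2 * c - 1" "i' \<le> 2 * c - 1" | "\<not> i \<le> 2 * c - 1" "\<not> i' \<le> 2 * c - 1"
    | "i \<le> 2 * c - 1 \<longleftrightarrow> \<not> i' \<le> 2 * c - 1" by blast
  then show "i = i'"
  proof cases
    case 1
    then show ?thesis using eq i by (simp add: wav_index_Inl)
  next
    case 2
    obtain j k where 1: "wav_index c i = Inr (j, k)" "i - 2 * c = (\<Sum>l<j. lvl_size c l) + nat (k + int c - 1)"
      using wav_index_Inr[OF c 2(1)] by metis
    obtain j' k' where 2: "wav_index c i' = Inr (j', k')" "i' - 2 * c = (\<Sum>l<j'. lvl_size c l) + nat (k' + int c - 1)"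
      using wav_index_Inr[OF c 2(2)] by metis
    show ?thesis using 1 2 eq \<open>\<not> i \<le> 2 * c - 1\<close> \<open>\<not> i' \<le> 2 * c - 1\<close> by auto
  next
    case 3
    then show ?thesis using eq wav_index_Inl wav_index_Inr[OF c] by (metis sum.distinct(1))
  qed
qed

lemma abs_four_index_le: "\<bar>four_index i\<bar> \<le> int (i div 2)"
  unfolding four_index_def by auto

lemma inj_on_four_index: "inj_on four_index {1..}"
proof (rule inj_on_inverseI)
  fix i :: nat assume "i \<in> {1..}"
  then show "(\<lambda>n. if n > 0 then 2 * nat n else 2 * nat (- n) + 1) (four_index i) = i"
    unfolding four_index_def by (auto elim: oddE)
qed

section \<open>Wavelet columns of U\<close>

lemma inj_if_l2_orthonormal_basis: "l2_orthonormal_basis e \<Longrightarrow> inj e"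
  unfolding l2_orthonormal_basis_def inj_def by (metis zero_neq_one)

lemma compact_MRA_wavelet_inj: "compact_MRA_wavelet \<Phi> \<Psi> a \<Longrightarrow> inj (wav_fun \<Phi> \<Psi>)"
  unfolding compact_MRA_wavelet_def wav_fun_def by (auto dest: inj_if_l2_orthonormal_basis)

lemma compact_MRA_wavelet_support:
  assumes "compact_MRA_wavelet \<Phi> \<Psi> a" and "\<Psi> y \<noteq> 0"
  shows "y \<in> {0..a}"
  using assms closure_subset[of "{x. \<Psi> x \<noteq> 0}"] unfolding compact_MRA_wavelet_def fsupport_def by auto

lemma compact_MRA_wavelet_integrable:
  assumes "compact_MRA_wavelet \<Phi> \<Psi> a"
  shows "integrable lborel \<Psi>"
proof -
  have "square_integrable \<Psi>" using assms unfolding compact_MRA_wavelet_def by blast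
  from integrable_if_square_integrable_bounded_support[OF this compact_MRA_wavelet_support[OF assms]]
  show ?thesis .
qed

lemma varphi_between_levels:
  assumes wav: "compact_MRA_wavelet \<Phi> \<Psi> a" and ca: "\<lceil>a\<rceil> = int c" "c \<ge> 1"
    and sub: "varphi \<Phi> \<Psi> a q \<in> Omega_R \<Phi> \<Psi> a R2 - Omega_R \<Phi> \<Psi> a R1" and q: "q \<ge> 1"
  obtains j k where "wav_index c q = Inr (j, k)" "R1 \<le> j" "j < R2" "- (int c - 1) \<le> k" "k \<le> 2 ^ j * int c - 1"
proof -
  have varphi: "varphi \<Phi> \<Psi> a q = wav_fun \<Phi> \<Psi> (wav_index c q)"
    unfolding varphi_def using ca by simp
  have inj: "wav_fun \<Phi> \<Psi> s = wav_fun \<Phi> \<Psi> s' \<longleftrightarrow> s = s'" for s s'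
    using compact_MRA_wavelet_inj[OF wav] by (auto dest: injD)
  show ?thesis
  proof (cases "q \<le> 2 * c - 1")
    case True
    then have "varphi \<Phi> \<Psi> a q \<in> Omega_R \<Phi> \<Psi> a R1"
      using q ca unfolding varphi wav_index_Inl[OF True] wav_fun_def Omega_R_def by auto
    then show ?thesis using sub by simp
  next
    case False
    then obtain j k where jk: "wav_index c q = Inr (j, k)" "- (int c - 1) \<le> k" "k \<le> 2 ^ j * int c - 1"
      by (rule wav_index_Inr[OF ca(2)])
    have dil: "varphi \<Phi> \<Psi> a q = dil_trans \<Psi> j k"
      unfolding varphi jk(1) wav_fun_def by simp
    have k: "- \<lceil>a\<rceil> < k" "k < 2 ^ j * \<lceil>a\<rceil>" using jk(2,3) ca by auto
    have "R1 \<le> j"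
    proof (rule ccontr)
      assume "\<not> R1 \<le> j"
      then have "dil_trans \<Psi> j k \<in> Omega_R \<Phi> \<Psi> a R1"
        using k unfolding Omega_R_def not_le by blast
      then show False using sub dil by simp
    qed
    moreover have "j < R2"
    proof -
      have "dil_trans \<Psi> j k \<in> Omega_R \<Phi> \<Psi> a R2" using sub dil by simp
      then consider k' where "wav_fun \<Phi> \<Psi> (Inr (j, k)) = wav_fun \<Phi> \<Psi> (Inl k')"
        | j' k' where "wav_fun \<Phi> \<Psi> (Inr (j, k)) = wav_fun \<Phi> \<Psi> (Inr (j', k'))" "j' < R2"
        unfolding Omega_R_def wav_fun_def by auto
      then show ?thesis by cases (simp_all add: inj)
    qed
    ultimately show ?thesis using that jk by blast
  qed
qed

text \<open>In the notation of the paper T1 = c - 1 and T2 = 2c - 1, so T1 + T2 = 3c - 2.\<close>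

lemma cnj_four_fun:
  assumes "\<lceil>a\<rceil> = int c"
  shows "cnj (four_fun a \<omega> n x) = complex_of_real (sqrt \<omega>) * exp (- (\<i> * complex_of_real (x * (2 * pi * real_of_int n * \<omega>))))
    * complex_of_real (indicator {- (real c - 1) / (\<omega> * (3 * real c - 2)) .. (2 * real c - 1) / (\<omega> * (3 * real c - 2))} x)"
proof -
  have phase: "cnj (2 * complex_of_real pi * \<i> * of_int n * complex_of_real (\<omega> * x)) = - (\<i> * complex_of_real (x * (2 * pi * real_of_int n * \<omega>)))"
    by (simp add: algebra_simps)
  have window: "real_of_int (\<lceil>a\<rceil> - 1) + real_of_int (2 * \<lceil>a\<rceil> - 1) = 3 * real c - 2"
    using assms by simp
  have "cnj (four_fun a \<omega> n x) = complex_of_real (sqrt \<omega>) * exp (cnj (2 * complex_of_real pi * \<i> * of_int n * complex_of_real (\<omega> * x)))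
    * complex_of_real (indicator {- real_of_int (\<lceil>a\<rceil> - 1) / (\<omega> * (3 * real c - 2)) .. real_of_int (2 * \<lceil>a\<rceil> - 1) / (\<omega> * (3 * real c - 2))} x)"
    unfolding four_fun_def Let_def window by (simp only: complex_cnj_mult complex_cnj_complex_of_real exp_cnj)
  then show ?thesis unfolding phase by (simp add: assms)
qed

lemma dil_trans_support_in_window:
  fixes y \<omega> :: real and k :: int
  assumes y: "0 \<le> y" "y \<le> real c" and k: "- (int c - 1) \<le> k" "k \<le> 2 ^ j * int c - 1"
    and c: "c \<ge> 1" and \<omega>: "0 < \<omega>" "\<omega> * (3 * real c - 2) \<le> 1"
  shows "(y + real_of_int k) / 2 ^ j \<in> {- (real c - 1) / (\<omega> * (3 * real c - 2)) .. (2 * real c - 1) / (\<omega> * (3 * real c - 2))}"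
proof -
  define D where "D = \<omega> * (3 * real c - 2)"
  have D: "0 < D" "D \<le> 1" using \<omega> c unfolding D_def by auto
  have "real_of_int (- (int c - 1)) \<le> real_of_int k" "real_of_int k \<le> real_of_int (2 ^ j * int c - 1)"
    using k by (simp_all only: of_int_le_iff)
  then have k': "1 - real c \<le> real_of_int k" "real_of_int k \<le> 2 ^ j * real c - 1" by simp_all
  have "- (real c - 1) / D \<le> - (real c - 1)"
    using D c by (simp add: divide_le_eq mult_le_cancel_left1)
  also have "\<dots> \<le> - (real c - 1) / 2 ^ j"
    using divide_left_mono[of 1 "2 ^ j" "real c - 1"] c by (simp add: diff_divide_distrib)
  also have "\<dots> \<le> (y + real_of_int k) / 2 ^ j"
    using y k' by (intro divide_right_mono) auto
  finally have lo: "- (real c - 1) / D \<le> (y + real_of_int k) / 2 ^ j" .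
  have "(real c - 1) * 1 \<le> (real c - 1) * 2 ^ j" using c by (intro mult_left_mono) auto
  then have "y + real_of_int k \<le> (2 * real c - 1) * 2 ^ j" using y k' by (simp add: algebra_simps)
  then have "(y + real_of_int k) / 2 ^ j \<le> 2 * real c - 1" by (simp add: divide_le_eq)
  also have "\<dots> \<le> (2 * real c - 1) / D" using D c by (simp add: le_divide_eq mult_left_le)
  finally show ?thesis using lo unfolding D_def by simp
qed

lemma Umat_wavelet_entry:
  assumes wav: "compact_MRA_wavelet \<Phi> \<Psi> a" and ca: "\<lceil>a\<rceil> = int c" "c \<ge> 1"
    and m: "m > 0" "\<omega> = 1 / real m" "3 * c - 1 \<le> m"
    and q: "wav_index c q = Inr (j, k)" and k: "- (int c - 1) \<le> k" "k \<le> 2 ^ j * int c - 1"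
  shows "Umat \<Phi> \<Psi> a \<omega> i q = complex_of_real (sqrt (1 / real m) * 2 powr (- real j / 2))
        * cis (- (2 * pi * real_of_int (k * four_index i) / real (m * 2 ^ j)))
        * fourier \<Psi> (2 * pi * real_of_int (four_index i) / real (m * 2 ^ j))"
proof -
  define s where "s = 2 * pi * real_of_int (four_index i) * \<omega>"
  define W where "W = {- (real c - 1) / (\<omega> * (3 * real c - 2)) .. (2 * real c - 1) / (\<omega> * (3 * real c - 2))}"
  have "a \<le> real c" using ca(1) by (metis le_of_int_ceiling of_int_of_nat_eq)
  moreover have "0 < \<omega>" using m by simp
  moreover have "real (3 * c - 1) \<le> real m" using m(3) by (rule of_nat_mono)
  then have "3 * real c - 2 \<le> real m" using ca(2) by (simp add: of_nat_diff)
  then have "\<omega> * (3 * real c - 2) \<le> \<omega> * real m" using \<open>0 < \<omega>\<close> by (intro mult_left_mono) auto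
  then have "\<omega> * (3 * real c - 2) \<le> 1" using m(1,2) by simp
  ultimately have window: "(y + real_of_int k) / 2 ^ j \<in> W" if "\<Psi> y \<noteq> 0" for y
    using compact_MRA_wavelet_support[OF wav that] dil_trans_support_in_window[OF _ _ k ca(2)]
    unfolding W_def by auto
  have "Umat \<Phi> \<Psi> a \<omega> i q
      = (LINT x|lborel. dil_trans \<Psi> j k x * (complex_of_real (sqrt \<omega>) * exp (- (\<i> * complex_of_real (x * s))) * complex_of_real (indicator W x)))"
    unfolding Umat_def l2_inner_def varphi_def wav_fun_def cnj_four_fun[OF ca(1)] s_def W_def
    using ca(1) q by simp
  also have "\<dots> = complex_of_real (sqrt \<omega>) * complex_of_real (2 powr (- real j / 2)) * exp (- (\<i> * complex_of_real (real_of_int k * s / 2 ^ j))) * fourier \<Psi> (s / 2 ^ j)"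
    by (rule integral_dil_trans_windowed_exp[OF window])
  also have "\<dots> = complex_of_real (sqrt (1 / real m) * 2 powr (- real j / 2))
        * cis (- (2 * pi * real_of_int (k * four_index i) / real (m * 2 ^ j)))
        * fourier \<Psi> (2 * pi * real_of_int (four_index i) / real (m * 2 ^ j))"
  proof -
    have "real_of_int k * s / 2 ^ j = 2 * pi * real_of_int (k * four_index i) / real (m * 2 ^ j)"
      unfolding s_def m(2) by simp
    moreover have "s / 2 ^ j = 2 * pi * real_of_int (four_index i) / real (m * 2 ^ j)"
      unfolding s_def m(2) by simp
    ultimately show ?thesis unfolding cis_conv_exp m(2) by simp
  qed
  finally show ?thesis .
qed

section \<open>The norm estimate\<close>

lemma abs_sampled_frequency_le:
  assumes i: "i \<le> N" and N: "real N \<le> \<gamma> * real m * 2 ^ R1" and j: "R1 \<le> j" and m: "m > 0"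
  shows "\<bar>2 * pi * real_of_int (four_index i) / real (m * 2 ^ j)\<bar> \<le> pi * \<gamma> * (1 / 2) ^ (j - R1)"
proof -
  have "\<bar>real_of_int (four_index i)\<bar> \<le> real N / 2"
    using abs_four_index_le[of i] div_le_mono[OF i, of 2] by linarith
  then have "\<bar>2 * pi * real_of_int (four_index i) / real (m * 2 ^ j)\<bar> \<le> 2 * pi * (real N / 2) / (real m * 2 ^ j)"
    using m by (simp add: abs_mult divide_right_mono)
  also have "\<dots> \<le> 2 * pi * ((\<gamma> * real m * 2 ^ R1) / 2) / (real m * 2 ^ j)"
    using N m by (intro divide_right_mono mult_left_mono) auto
  also have "\<dots> = pi * \<gamma> * (2 ^ R1 / 2 ^ j)" using m by (simp add: field_simps)
  also have "2 ^ R1 / 2 ^ j = ((1::real) / 2) ^ (j - R1)"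
    using j by (simp add: power_diff power_divide)
  finally show ?thesis .
qed

lemma level_Parseval:
  fixes x :: "'q \<Rightarrow> complex" and \<kappa> :: "'q \<Rightarrow> int"
  assumes Q: "finite Q" "inj_on \<kappa> Q" and \<kappa>: "\<And>q. q \<in> Q \<Longrightarrow> - (int c - 1) \<le> \<kappa> q \<and> \<kappa> q \<le> 2 ^ j * int c - 1"
    and c: "c \<ge> 1" "3 * c - 1 \<le> m" and N: "N < m * 2 ^ j"
  shows "(\<Sum>i\<in>{1..N}. (cmod (\<Sum>q\<in>Q. x q * cis (- (2 * pi * real_of_int (\<kappa> q * four_index i) / real (m * 2 ^ j)))))\<^sup>2)
    \<le> real (m * 2 ^ j) * (\<Sum>q\<in>Q. (cmod (x q))\<^sup>2)"
proof -
  have "(\<Sum>i\<in>{1..N}. (cmod (\<Sum>q\<in>Q. x q * cis (- (2 * pi * real_of_int (\<kappa> q * four_index i) / real (m * 2 ^ j)))))\<^sup>2)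
    = (\<Sum>n\<in>four_index ` {1..N}. (cmod (\<Sum>q\<in>Q. x q * cis (- (2 * pi * real_of_int (\<kappa> q * n) / real (m * 2 ^ j)))))\<^sup>2)"
    by (subst sum.reindex) (auto intro: inj_on_subset[OF inj_on_four_index])
  \<comment> \<open>The sampled frequencies lie among the m 2^j consecutive integers starting at -(N div 2), and
      the shifts \<kappa> q differ by less than m 2^j; the latter is where 3c - 1 \<le> m is needed.\<close>
  also have "\<dots> \<le> real (m * 2 ^ j) * (\<Sum>q\<in>Q. (cmod (x q))\<^sup>2)"
  proof (rule discrete_Parseval_le[OF Q, where lo = "- (int c - 1)" and b = "- int (N div 2)"])
    have "(3 * int c - 1) * 2 ^ j \<le> int m * 2 ^ j" using c by (intro mult_right_mono) auto
    moreover have "(2 * int c - 1) * 1 \<le> (2 * int c - 1) * 2 ^ j" using c by (intro mult_left_mono) auto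
    ultimately show "- (int c - 1) \<le> \<kappa> q \<and> \<kappa> q < - (int c - 1) + int (m * 2 ^ j)" if "q \<in> Q" for q
      using \<kappa>[OF that] by (simp add: algebra_simps)
    show "0 < m * 2 ^ j" using N by (cases "m = 0") auto
    show "four_index ` {1..N} \<subseteq> (\<lambda>r. - int (N div 2) + int r) ` {..<m * 2 ^ j}"
    proof
      fix n assume "n \<in> four_index ` {1..N}"
      then obtain i where "i \<le> N" "n = four_index i" by auto
      then have "\<bar>n\<bar> \<le> int (N div 2)" using abs_four_index_le[of i] div_le_mono[of i N 2] by linarith
      then have "n = - int (N div 2) + int (nat (n + int (N div 2)))" "nat (n + int (N div 2)) < m * 2 ^ j"
        using N by linarith+
      then show "n \<in> (\<lambda>r. - int (N div 2) + int r) ` {..<m * 2 ^ j}" by blast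
    qed
  qed
  finally show ?thesis .
qed

lemma sampled_weight_le:
  assumes F: "\<And>t. cmod (F t) \<le> L * \<bar>t\<bar> ^ v" and L: "L \<ge> 0"
    and N: "real N \<le> \<gamma> * real m * 2 ^ R1" and j: "R1 \<le> j" and i: "i \<le> N" and m: "m > 0"
  shows "(cmod (complex_of_real (sqrt (1 / real m) * 2 powr (- real j / 2))
      * F (2 * pi * real_of_int (four_index i) / real (m * 2 ^ j))))\<^sup>2
    \<le> ((1 / 2) ^ (2 * v)) ^ (j - R1) * (L\<^sup>2 * (pi * \<gamma>) ^ (2 * v) / real (m * 2 ^ j))"
proof -
  define t where "t = 2 * pi * real_of_int (four_index i) / real (m * 2 ^ j)"
  have "L * \<bar>t\<bar> ^ v \<le> L * (pi * \<gamma> * (1 / 2) ^ (j - R1)) ^ v"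
    unfolding t_def using abs_sampled_frequency_le[OF i N j m] L by (intro mult_left_mono power_mono) auto
  then have "cmod (F t) \<le> L * (pi * \<gamma> * (1 / 2) ^ (j - R1)) ^ v"
    using F[of t] by linarith
  then have "(cmod (F t))\<^sup>2 \<le> (L * (pi * \<gamma> * (1 / 2) ^ (j - R1)) ^ v)\<^sup>2"
    by (intro power_mono) auto
  also have "\<dots> = L\<^sup>2 * (pi * \<gamma>) ^ (2 * v) * ((1 / 2) ^ (2 * v)) ^ (j - R1)"
    by (simp add: power_mult_distrib power_mult[symmetric] ac_simps)
  finally have "(cmod (F t))\<^sup>2 \<le> L\<^sup>2 * (pi * \<gamma>) ^ (2 * v) * ((1 / 2) ^ (2 * v)) ^ (j - R1)" .
  moreover have "(2 powr (- real j / 2))\<^sup>2 = 1 / 2 ^ j"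
    unfolding power2_eq_square by (simp add: powr_minus_divide powr_realpow flip: powr_add)
  then have "(cmod (complex_of_real (sqrt (1 / real m) * 2 powr (- real j / 2)) * F t))\<^sup>2 = (cmod (F t))\<^sup>2 / real (m * 2 ^ j)"
    using m by (simp add: norm_mult power_mult_distrib abs_mult real_sqrt_pow2)
  ultimately show ?thesis unfolding t_def[symmetric] using m by (simp add: divide_right_mono ac_simps)
qed

lemma sampling_count_lt:
  assumes N: "real N \<le> \<gamma> * real m * 2 ^ R1" and \<gamma>: "\<gamma> < 1" and m: "m > 0" and j: "R1 \<le> j"
  shows "N < m * 2 ^ j"
proof -
  have "\<gamma> * (real m * 2 ^ R1) < 1 * (real m * 2 ^ R1)"
    using \<gamma> m by (intro mult_strict_right_mono) auto
  then have "real N < real m * 2 ^ R1" using N by (simp add: mult.assoc)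
  also have "\<dots> \<le> real m * 2 ^ j" using j by (intro mult_left_mono power_increasing) auto
  finally have "real N < real (m * 2 ^ j)" by simp
  then show ?thesis by (simp only: of_nat_less_iff)
qed

lemma sampled_wavelet_matrix_bound:
  fixes A :: "nat \<Rightarrow> 'q \<Rightarrow> complex" and x :: "'q \<Rightarrow> complex" and F :: "real \<Rightarrow> complex"
    and lev :: "'q \<Rightarrow> nat" and \<kappa> :: "'q \<Rightarrow> int"
  assumes C: "finite C" "inj_on (\<lambda>q. (lev q, \<kappa> q)) C"
    and lev: "\<And>q. q \<in> C \<Longrightarrow> R1 \<le> lev q \<and> lev q < R2"
    and \<kappa>: "\<And>q. q \<in> C \<Longrightarrow> - (int c - 1) \<le> \<kappa> q \<and> \<kappa> q \<le> 2 ^ lev q * int c - 1"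
    and c: "c \<ge> 1" "3 * c - 1 \<le> m"
    and A: "\<And>i q. q \<in> C \<Longrightarrow> A i q = complex_of_real (sqrt (1 / real m) * 2 powr (- real (lev q) / 2))
        * cis (- (2 * pi * real_of_int (\<kappa> q * four_index i) / real (m * 2 ^ lev q)))
        * F (2 * pi * real_of_int (four_index i) / real (m * 2 ^ lev q))"
    and F: "\<And>t. cmod (F t) \<le> L * \<bar>t\<bar> ^ v" and L: "L \<ge> 0"
    and N: "real N \<le> \<gamma> * real m * 2 ^ R1" and \<gamma>: "\<gamma> < 1"
  shows "(\<Sum>i\<in>{1..N}. (cmod (\<Sum>q\<in>C. A i q * x q))\<^sup>2)
     \<le> L\<^sup>2 * (pi * \<gamma>) ^ (2 * v) * (\<Sum>j\<in>{R1..<R2}. ((1 / 2) ^ (2 * v)) ^ (j - R1)) * (\<Sum>q\<in>C. (cmod (x q))\<^sup>2)"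
proof -
  define K where "K = L\<^sup>2 * (pi * \<gamma>) ^ (2 * v)"
  define \<rho> :: "nat \<Rightarrow> real" where "\<rho> j = ((1 / 2) ^ (2 * v)) ^ (j - R1)" for j
  define C\<^sub>j where "C\<^sub>j j = {q \<in> C. lev q = j}" for j
  define w where "w j i = complex_of_real (sqrt (1 / real m) * 2 powr (- real j / 2))
    * F (2 * pi * real_of_int (four_index i) / real (m * 2 ^ j))" for j i
  define p where "p j i = (\<Sum>q\<in>C\<^sub>j j. x q * cis (- (2 * pi * real_of_int (\<kappa> q * four_index i) / real (m * 2 ^ j))))" for j i
  have m: "m > 0" using c by simp
  have regroup: "(\<Sum>q\<in>C. A i q * x q) = (\<Sum>j\<in>{R1..<R2}. w j i * p j i)" for i
  proof -
    have "(\<Sum>q\<in>C. A i q * x q) = (\<Sum>j\<in>{R1..<R2}. \<Sum>q\<in>C\<^sub>j j. A i q * x q)"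
      unfolding C\<^sub>j_def using C(1) lev by (intro sum.group[symmetric]) auto
    also have "\<dots> = (\<Sum>j\<in>{R1..<R2}. w j i * p j i)"
      unfolding p_def sum_distrib_left
      by (intro sum.cong refl) (auto simp: C\<^sub>j_def A w_def ac_simps)
    finally show ?thesis .
  qed
  have weight: "(cmod (w j i))\<^sup>2 \<le> \<rho> j * (K / real (m * 2 ^ j))" if "j \<in> {R1..<R2}" "i \<in> {1..N}" for j i
    unfolding w_def \<rho>_def K_def using that by (intro sampled_weight_le[OF F L N _ _ m]) auto
  have Parseval: "K / real (m * 2 ^ j) * (\<Sum>i\<in>{1..N}. (cmod (p j i))\<^sup>2) \<le> K * (\<Sum>q\<in>C\<^sub>j j. (cmod (x q))\<^sup>2)"
    if "j \<in> {R1..<R2}" for j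
  proof -
    have "N < m * 2 ^ j" using that by (intro sampling_count_lt[OF N \<gamma> m]) auto
    then have "(\<Sum>i\<in>{1..N}. (cmod (p j i))\<^sup>2) \<le> real (m * 2 ^ j) * (\<Sum>q\<in>C\<^sub>j j. (cmod (x q))\<^sup>2)"
      unfolding p_def using C \<kappa> c by (intro level_Parseval) (auto simp: C\<^sub>j_def inj_on_def)
    then have "K / real (m * 2 ^ j) * (\<Sum>i\<in>{1..N}. (cmod (p j i))\<^sup>2)
        \<le> K / real (m * 2 ^ j) * (real (m * 2 ^ j) * (\<Sum>q\<in>C\<^sub>j j. (cmod (x q))\<^sup>2))"
      unfolding K_def by (intro mult_left_mono) auto
    then show ?thesis using m by simp
  qed
  have "(\<Sum>i\<in>{1..N}. (cmod (\<Sum>q\<in>C. A i q * x q))\<^sup>2)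
      \<le> (\<Sum>j\<in>{R1..<R2}. \<rho> j) * (\<Sum>j\<in>{R1..<R2}. K * (\<Sum>q\<in>C\<^sub>j j. (cmod (x q))\<^sup>2))"
    unfolding regroup
    by (rule sum_norm_sum_squared_le_levels[where \<beta> = "\<lambda>j. K / real (m * 2 ^ j)"])
      (use weight Parseval in \<open>auto simp: \<rho>_def K_def\<close>)
  also have "(\<Sum>j\<in>{R1..<R2}. K * (\<Sum>q\<in>C\<^sub>j j. (cmod (x q))\<^sup>2)) = K * (\<Sum>q\<in>C. (cmod (x q))\<^sup>2)"
    unfolding C\<^sub>j_def sum_distrib_left[symmetric] using C(1) lev by (subst sum.group) auto
  finally show ?thesis unfolding K_def \<rho>_def by (simp add: ac_simps)
qed

lemma PUP_norm_le:
  assumes "\<And>x. (\<Sum>j\<in>{M1<..M2}. (cmod (x j))\<^sup>2) \<le> 1 \<Longrightarrow> sqrt (\<Sum>i\<in>{1..N}. (cmod (\<Sum>j\<in>{M1<..M2}. A i j * x j))\<^sup>2) \<le> B"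
  shows "PUP_norm A N M1 M2 \<le> B"
proof -
  define S where "S = {x :: nat \<Rightarrow> complex. (\<Sum>j\<in>{M1<..M2}. (cmod (x j))\<^sup>2) \<le> 1}"
  define f where "f x = sqrt (\<Sum>i\<in>{1..N}. (cmod (\<Sum>j\<in>{M1<..M2}. A i j * x j))\<^sup>2)" for x
  have "(\<lambda>_. 0) \<in> S" unfolding S_def by simp
  then have "f ` S \<noteq> {}" by blast
  moreover have "\<And>y. y \<in> f ` S \<Longrightarrow> y \<le> B" using assms unfolding S_def f_def by blast
  ultimately have "Sup (f ` S) \<le> B" by (rule cSup_least)
  then show ?thesis unfolding PUP_norm_def S_def f_def .
qed

lemma Linf_norm_nonneg: "0 \<le> Linf_norm \<theta>"
proof -
  have AE: "AE z in lborel. ereal (cmod (\<theta> z)) \<le> Linf_norm \<theta>"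
    unfolding Linf_norm_def by (rule esssup_AE)
  show ?thesis
  proof (cases "Linf_norm \<theta>")
    case (real L)
    then have "AE z in lborel. cmod (\<theta> z) \<le> L" using AE by simp
    then have "AE (z::real) in lborel. (0::real) \<le> L"
      by (rule eventually_mono) (auto intro: order_trans[OF norm_ge_zero])
    then show ?thesis using real continuous_AE_le_imp_le[of "\<lambda>_. 0" "\<lambda>_. L"] by auto
  next
    case MInf
    then have "AE z in lborel. ereal (cmod (\<theta> z)) \<le> - \<infinity>" using AE by simp
    then have "AE (z::real) in lborel. (1::real) \<le> 0" by (rule eventually_mono) simp
    then show ?thesis using continuous_AE_le_imp_le[of "\<lambda>_. 1" "\<lambda>_. 0"] by auto
  qed simp
qed

lemma fourier_le_if_vanishing_moments:
  assumes "integrable lborel f" and vm: "vanishing_moments f v \<theta>" and L: "Linf_norm \<theta> = ereal L"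
  shows "cmod (fourier f t) \<le> L * \<bar>t\<bar> ^ v"
proof (rule continuous_AE_le_imp_le[where F = "\<lambda>t. cmod (fourier f t)" and g = "\<lambda>t. L * \<bar>t\<bar> ^ v"])
  show "continuous_on UNIV (\<lambda>t. cmod (fourier f t))"
    using isCont_fourier[OF assms(1)] by (intro continuous_at_imp_continuous_on isCont_norm) auto
  show "continuous_on UNIV (\<lambda>t. L * \<bar>t\<bar> ^ v)" by (intro continuous_intros)
  have "AE z in lborel. cmod (\<theta> z) \<le> L"
    using esssup_AE[of "\<lambda>z. ereal (cmod (\<theta> z))" lborel] L unfolding Linf_norm_def by simp
  then show "AE z in lborel. cmod (fourier f z) \<le> L * \<bar>z\<bar> ^ v"
  proof (rule eventually_mono)
    fix z assume "cmod (\<theta> z) \<le> L"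
    then have "\<bar>z\<bar> ^ v * cmod (\<theta> z) \<le> \<bar>z\<bar> ^ v * L" by (intro mult_left_mono) auto
    then show "cmod (fourier f z) \<le> L * \<bar>z\<bar> ^ v"
      using vm unfolding vanishing_moments_def by (simp add: norm_mult norm_power ac_simps)
  qed
qed

lemma sum_level_weights:
  assumes v: "v \<ge> 1" and R: "R1 < R2"
  shows "(\<Sum>j\<in>{R1..<R2}. ((1 / 2) ^ (2 * v)) ^ (j - R1) :: real)
    = (1 - 2 powr (2 * real v * (real R1 - real R2))) / (1 - 2 powr (- 2 * real v))"
proof -
  define r :: real where "r = (1 / 2) ^ (2 * v)"
  have "r \<le> (1 / 2) ^ 1" unfolding r_def using v by (intro power_decreasing) auto
  then have r1: "r \<noteq> 1" by auto
  have r: "r = 2 powr (- 2 * real v)"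
    unfolding r_def by (simp add: powr_minus_divide powr_realpow[symmetric] powr_powr[symmetric] power_one_over)
  have "(\<Sum>j\<in>{R1..<R2}. r ^ (j - R1)) = (\<Sum>i<R2 - R1. r ^ i)"
    by (rule sum.reindex_bij_witness[where i="\<lambda>i. i + R1" and j="\<lambda>j. j - R1"]) auto
  also have "\<dots> = (1 - r ^ (R2 - R1)) / (1 - r)"
    using r1 by (simp add: geometric_sum divide_simps) (simp add: algebra_simps)
  also have "r ^ (R2 - R1) = r powr real (R2 - R1)"
    unfolding r by (rule powr_realpow[symmetric]) simp
  also have "\<dots> = 2 powr (- 2 * real v * real (R2 - R1))"
    unfolding r by (rule powr_powr)
  also have "- 2 * real v * real (R2 - R1) = 2 * real v * (real R1 - real R2)"
    using R by (simp add: of_nat_diff algebra_simps)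
  also have "1 - r = 1 - 2 powr (- 2 * real v)" unfolding r ..
  finally show ?thesis by (simp only: r_def)
qed

lemma sampling_rate_nat:
  assumes ca: "\<lceil>a\<rceil> = int c" "c \<ge> 1"
    and \<omega>: "0 < \<omega>" "\<omega> < 1 / real_of_int ((\<lceil>a\<rceil> - 1) + (2 * \<lceil>a\<rceil> - 1))" and m: "1 / \<omega> = real m"
  shows "m > 0" "\<omega> = 1 / real m" "3 * c - 1 \<le> m"
proof -
  show m0: "m > 0" using m \<omega>(1) by (metis of_nat_0_less_iff zero_less_divide_1_iff)
  have "\<omega> = 1 / (1 / \<omega>)" by simp
  then show \<omega>m: "\<omega> = 1 / real m" unfolding m .
  have "1 / real m < 1 / (3 * real c - 2)" using \<omega>(2) ca unfolding \<omega>m by simp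
  then have "3 * real c - 2 < real m" using m0 ca(2) by (simp add: field_simps)
  then show "3 * c - 1 \<le> m" using ca(2) by linarith
qed

lemma PUP_norm_Umat_le:
  assumes wav: "compact_MRA_wavelet \<Phi> \<Psi> a" and ca: "\<lceil>a\<rceil> = int c" "c \<ge> 1"
    and m: "m > 0" "\<omega> = 1 / real m" "3 * c - 1 \<le> m"
    and sub: "{varphi \<Phi> \<Psi> a j | j. M1 < j \<and> j \<le> M2} \<subseteq> Omega_R \<Phi> \<Psi> a R2 - Omega_R \<Phi> \<Psi> a R1"
    and F: "\<And>t. cmod (fourier \<Psi> t) \<le> L * \<bar>t\<bar> ^ v" and L: "L \<ge> 0"
    and N: "real N \<le> \<gamma> * real m * 2 ^ R1" and \<gamma>: "0 < \<gamma>" "\<gamma> < 1"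
  shows "PUP_norm (Umat \<Phi> \<Psi> a \<omega>) N M1 M2 \<le> L * (pi * \<gamma>) ^ v * sqrt (\<Sum>j\<in>{R1..<R2}. ((1 / 2) ^ (2 * v)) ^ (j - R1))"
    (is "_ \<le> _ * sqrt ?S")
proof (rule PUP_norm_le)
  have S: "0 \<le> ?S" by (intro sum_nonneg) simp
  define lev where "lev q = fst (projr (wav_index c q))" for q
  define \<kappa> where "\<kappa> q = snd (projr (wav_index c q))" for q
  have col: "wav_index c q = Inr (lev q, \<kappa> q) \<and> R1 \<le> lev q \<and> lev q < R2
      \<and> - (int c - 1) \<le> \<kappa> q \<and> \<kappa> q \<le> 2 ^ lev q * int c - 1" if q: "q \<in> {M1<..M2}" for q
  proof -
    have "varphi \<Phi> \<Psi> a q \<in> Omega_R \<Phi> \<Psi> a R2 - Omega_R \<Phi> \<Psi> a R1" "q \<ge> 1" using sub q by auto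
    then obtain j k where "wav_index c q = Inr (j, k)" "R1 \<le> j" "j < R2" "- (int c - 1) \<le> k" "k \<le> 2 ^ j * int c - 1"
      by (rule varphi_between_levels[OF wav ca])
    then show ?thesis unfolding lev_def \<kappa>_def by simp
  qed
  have inj: "inj_on (\<lambda>q. (lev q, \<kappa> q)) {M1<..M2}"
  proof (rule inj_onI)
    fix q q' assume q: "q \<in> {M1<..M2}" "q' \<in> {M1<..M2}" and eq: "(lev q, \<kappa> q) = (lev q', \<kappa> q')"
    then have "wav_index c q = wav_index c q'" using col[OF q(1)] col[OF q(2)] by simp
    moreover have "q \<in> {1..}" "q' \<in> {1..}" using q by auto
    ultimately show "q = q'" using inj_on_wav_index[OF ca(2)] by (auto dest: inj_onD)
  qed
  fix x :: "nat \<Rightarrow> complex" assume x: "(\<Sum>j\<in>{M1<..M2}. (cmod (x j))\<^sup>2) \<le> 1"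
  have "(\<Sum>i\<in>{1..N}. (cmod (\<Sum>q\<in>{M1<..M2}. Umat \<Phi> \<Psi> a \<omega> i q * x q))\<^sup>2)
      \<le> L\<^sup>2 * (pi * \<gamma>) ^ (2 * v) * ?S * (\<Sum>q\<in>{M1<..M2}. (cmod (x q))\<^sup>2)"
    by (rule sampled_wavelet_matrix_bound[OF _ inj _ _ ca(2) m(3) _ F L N \<gamma>(2)])
      (use col Umat_wavelet_entry[OF wav ca m] in auto)
  also have "\<dots> \<le> L\<^sup>2 * (pi * \<gamma>) ^ (2 * v) * ?S"
    using x S by (intro mult_left_le) auto
  also have "\<dots> = (L * (pi * \<gamma>) ^ v * sqrt ?S)\<^sup>2"
    using S by (simp add: power_mult_distrib power_mult[symmetric] ac_simps)
  finally show "sqrt (\<Sum>i\<in>{1..N}. (cmod (\<Sum>q\<in>{M1<..M2}. Umat \<Phi> \<Psi> a \<omega> i q * x q))\<^sup>2) \<le> L * (pi * \<gamma>) ^ v * sqrt ?S"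
    using L \<gamma> S by (intro real_le_lsqrt) auto
qed

lemma pi_gamma_power_le:
  fixes L \<gamma> s :: real
  assumes "0 \<le> L" "0 < \<gamma>" "0 \<le> s"
  shows "L * (pi * \<gamma>) ^ v * s \<le> pi\<^sup>2 / 4 * (L * (2 * pi * \<gamma>) ^ v * s)"
proof -
  have "L * (pi * \<gamma>) ^ v * s \<le> L * (2 * pi * \<gamma>) ^ v * s"
    using assms by (intro mult_right_mono mult_left_mono power_mono) auto
  moreover have "2 * 2 \<le> pi * pi" using pi_gt3 by (intro mult_mono) auto
  then have "1 * (L * (2 * pi * \<gamma>) ^ v * s) \<le> pi\<^sup>2 / 4 * (L * (2 * pi * \<gamma>) ^ v * s)"
    using assms by (intro mult_right_mono) (auto simp: power2_eq_square)
  ultimately show ?thesis by simp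
qed

theorem lemma7p19:
  fixes \<Phi> \<Psi> \<theta> :: "real \<Rightarrow> complex" and a \<omega> \<gamma> :: real and v R1 R2 M1 M2 N :: nat
  assumes wav: "compact_MRA_wavelet \<Phi> \<Psi> a" and a1: "a \<ge> 1"
    and vm: "vanishing_moments \<Psi> v \<theta>" and v1: "v \<ge> 1"
    and om0: "0 < \<omega>" and om1: "\<omega> < 1 / real_of_int ((\<lceil>a\<rceil> - 1) + (2 * \<lceil>a\<rceil> - 1))"
    and omN: "\<exists>m::nat. 1 / \<omega> = real m"
    and R1: "R1 \<ge> 1" and R12: "R2 > R1"
    and M12: "M1 < M2"
    and sub: "{varphi \<Phi> \<Psi> a j | j. M1 < j \<and> j \<le> M2} \<subseteq> Omega_R \<Phi> \<Psi> a R2 - Omega_R \<Phi> \<Psi> a R1"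
    and \<gamma>: "0 < \<gamma>" "\<gamma> < 1"
    and N: "real N \<le> \<gamma> * (1 / \<omega>) * 2 ^ R1"
  shows "ereal (PUP_norm (Umat \<Phi> \<Psi> a \<omega>) N M1 M2)
    \<le> ereal (pi\<^sup>2 / 4) * Linf_norm \<theta> * ereal ((2 * pi * \<gamma>) ^ v
        * sqrt ((1 - 2 powr (2 * real v * (real R1 - real R2))) / (1 - 2 powr (- 2 * real v))))"
proof -
  define S :: real where "S = (1 - 2 powr (2 * real v * (real R1 - real R2))) / (1 - 2 powr (- 2 * real v))"
  have S: "S = (\<Sum>j\<in>{R1..<R2}. ((1 / 2) ^ (2 * v)) ^ (j - R1))" and "S > 0"
    unfolding S_def sum_level_weights[OF v1 R12, symmetric] using R12 by (auto intro: sum_pos)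
  have ca: "\<lceil>a\<rceil> = int (nat \<lceil>a\<rceil>)" "nat \<lceil>a\<rceil> \<ge> 1" using a1 by linarith+
  obtain m where "1 / \<omega> = real m" using omN by blast
  note m = sampling_rate_nat[OF ca om0 om1 this]
  consider "Linf_norm \<theta> = \<infinity>" | L where "Linf_norm \<theta> = ereal L" "L \<ge> 0"
    using Linf_norm_nonneg[of \<theta>] by (cases "Linf_norm \<theta>") auto
  then show ?thesis
  proof cases
    case 1
    then show ?thesis using \<gamma> \<open>S > 0\<close> unfolding S_def[symmetric] by simp
  next
    case (2 L)
    have "PUP_norm (Umat \<Phi> \<Psi> a \<omega>) N M1 M2 \<le> L * (pi * \<gamma>) ^ v * sqrt S"
      unfolding S using N m(2) \<gamma>
      by (intro PUP_norm_Umat_le[OF wav ca m sub _ 2(2)] fourier_le_if_vanishing_moments[OF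
          compact_MRA_wavelet_integrable[OF wav] vm 2(1)]) auto
    also have "\<dots> \<le> pi\<^sup>2 / 4 * (L * (2 * pi * \<gamma>) ^ v * sqrt S)"
      using 2(2) \<gamma> \<open>S > 0\<close> by (intro pi_gamma_power_le) auto
    finally show ?thesis using 2(1) unfolding S_def[symmetric] by (simp add: ac_simps)
  qed
qed

end
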